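(* Let $c_1,c_2,c_3\in\mathbb{C}$ be three non-aligned points with $c_1+c_2+c_3=0$. For every $\eta>0$ there exist $\epsilon_0\in(0,\eta)$ and $\alpha_0\in(0,\eta)$ such that for every $\rho\in\mathbb{C}$ with $1-\alpha_0\le|\rho|\le1+\alpha_0$, setting $\phi_j(z):=\rho z+\epsilon_0c_j$ for $j\in\{1,2,3\}$, we have $$\overline{\mathbb{D}}\subset\bigcup_{j=1}^3\phi_j(\mathbb{D}),$$ and there are three open sets $H_1,H_2,H_3$ such that $\mathbb{D}=\bigcup_{j=1}^3H_j$, $\overline{\phi_j(H_j)}\subset\mathbb{D}$ and $\overline{\phi_j(\tfrac13H_j)}\subset\tfrac13\mathbb{D}$ for each $j$.
   Context: $\mathbb{D}$ is the unit disc of $\mathbb{C}$; for $E\subset\mathbb{C}$ and $t\in\mathbb{C}^*$, $tE$ is the image of $E$ under $z\mapsto tz$. The sets $H_j$ may depend on $\rho$. *)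

theory Defs
  imports "HOL-Analysis.Analysis"
begin

end

theory Submission
  imports Defs
begin

text \<open>Because \<open>c\<^sub>1 + c\<^sub>2 + c\<^sub>3 = 0\<close> and the \<open>c\<^sub>j\<close> span the plane, every \<open>w \<noteq> 0\<close> makes an
  obtuse angle with some \<open>c\<^sub>j\<close>, and by compactness of the unit circle uniformly so:
  \<open>\<langle>c\<^sub>j, w\<rangle> \<le> -\<kappa> |w|\<close>. Then \<open>|w + t c\<^sub>j|\<^sup>2 \<le> |w|\<^sup>2 - 2t\<kappa>|w| + t\<^sup>2|c\<^sub>j|\<^sup>2\<close>, so for small
  \<open>t\<close> a translation by \<open>t c\<^sub>j\<close> pulls every point of modulus \<open>\<ge> 1/2\<close> inward by an amount of order
  \<open>t\<kappa>\<close>, while points of modulus \<open>< 1/2\<close> stay well inside the disc. Taking \<open>\<alpha>\<close> and the safety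
  margins of order \<open>\<epsilon>\<kappa>\<close>, this absorbs the dilation by \<open>\<rho>\<close>: applied to \<open>-c\<^sub>j\<close> it gives the
  covering, and applied with \<open>t = \<epsilon>\<close> and \<open>t = 3\<epsilon>\<close> (note \<open>\<phi>\<^sub>j(z/3) = (\<rho>z + 3\<epsilon>c\<^sub>j)/3\<close>) it
  shows that the sets \<open>H\<^sub>j\<close> of points sent well inside by \<open>\<phi>\<^sub>j\<close> and by \<open>\<phi>\<^sub>j \<circ> (1/3)\<close>
  cover the disc.\<close>

lemma continuous_on_Min_image:
  fixes f :: "'j \<Rightarrow> 'a::topological_space \<Rightarrow> 'b::linorder_topology"
  assumes "finite J" "J \<noteq> {}" "\<And>j. j \<in> J \<Longrightarrow> continuous_on S (f j)"
  shows "continuous_on S (\<lambda>x. Min ((\<lambda>j. f j x) ` J))"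
  using assms
proof (induction J rule: finite_ne_induct)
  case (insert j J)
  then show ?case by (simp add: continuous_on_min)
qed simp

lemma uniformly_negative_inner:
  fixes c :: "'j \<Rightarrow> 'a::euclidean_space"
  assumes "finite J" "J \<noteq> {}"
    and neg: "\<And>w. w \<noteq> 0 \<Longrightarrow> \<exists>j\<in>J. inner (c j) w < 0"
  shows "\<exists>\<kappa>>0. \<forall>w. \<exists>j\<in>J. inner (c j) w \<le> - \<kappa> * norm w"
proof -
  define f where "f w = Min ((\<lambda>j. inner (c j) w) ` J)" for w
  have "continuous_on (sphere 0 1) f"
    unfolding f_def using assms(1,2) by (intro continuous_on_Min_image continuous_intros)
  then obtain u where u: "u \<in> sphere 0 1" and max: "\<And>w. w \<in> sphere 0 1 \<Longrightarrow> f w \<le> f u"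
    using continuous_attains_sup[of "sphere (0::'a) 1" f] by auto
  have f_le: "\<exists>j\<in>J. inner (c j) w \<le> f w" for w
  proof -
    have "f w \<in> (\<lambda>j. inner (c j) w) ` J" unfolding f_def using assms(1,2) by (intro Min_in) auto
    then show ?thesis by force
  qed
  have "f u < 0"
  proof -
    have "u \<noteq> 0" using u by auto
    then obtain j where "j \<in> J" "inner (c j) u < 0" using neg by blast
    then show ?thesis unfolding f_def using assms(1) by (meson Min_le finite_imageI image_eqI le_less_trans)
  qed
  moreover have "\<exists>j\<in>J. inner (c j) w \<le> f u * norm w" for w
  proof (cases "w = 0")
    case True
    then show ?thesis using assms(2) by auto
  next
    case False
    obtain j where j: "j \<in> J" "inner (c j) (w /\<^sub>R norm w) \<le> f (w /\<^sub>R norm w)"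
      using f_le by blast
    have "inner (c j) (w /\<^sub>R norm w) \<le> f u" using j max[of "w /\<^sub>R norm w"] False by auto
    then have "inner (c j) w \<le> f u * norm w" using False by (simp add: field_simps)
    then show ?thesis using j(1) by blast
  qed
  ultimately show ?thesis by (intro exI[of _ "- f u"]) auto
qed

lemma orthogonal_complex_eq_scaleR:
  fixes x w :: complex
  assumes "inner x w = 0" "w \<noteq> 0"
  shows "x = (inner x (\<i> * w) / (norm w)\<^sup>2) *\<^sub>R (\<i> * w)"
proof -
  have "Re w * inner x w = 0" "Im w * inner x w = 0" using assms(1) by simp_all
  then show ?thesis using assms(2) unfolding inner_complex_def cmod_power2
    by (auto simp: complex_eq_iff field_simps complex_eq_0 power2_eq_square)
qed

lemma noncollinear_sum_zero_negative_inner: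
  fixes c :: "nat \<Rightarrow> complex"
  assumes noncol: "\<not> collinear {c 1, c 2, c 3}" and sum0: "c 1 + c 2 + c 3 = 0" and "w \<noteq> 0"
  shows "\<exists>j\<in>{1,2,3}. inner (c j) w < 0"
proof (rule ccontr)
  assume "\<not> ?thesis"
  then have nonneg: "0 \<le> inner (c j) w" if "j \<in> {1,2,3}" for j
    using that by force
  have "inner (c 1) w + inner (c 2) w + inner (c 3) w = 0"
    using sum0 by (metis inner_add_left inner_zero_left)
  then have "inner (c j) w = 0" if "j \<in> {1,2,3}" for j
    using that nonneg[of 1] nonneg[of 2] nonneg[of 3] by auto
  then have "\<exists>t. c j = 0 + t *\<^sub>R (\<i> * w)" if "j \<in> {1,2,3}" for j
    using that orthogonal_complex_eq_scaleR \<open>w \<noteq> 0\<close> by auto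
  then have "\<forall>x\<in>{c 1, c 2, c 3}. \<exists>t. x = 0 + t *\<^sub>R (\<i> * w)"
    by blast
  then have "collinear {c 1, c 2, c 3}"
    unfolding collinear_alt by blast
  with noncol show False ..
qed

lemma norm_add_scaleR_lt:
  fixes w c :: "'a::real_inner"
  assumes inward: "inner c w \<le> - \<kappa> * norm w"
    and C: "norm c \<le> C" and t: "0 \<le> t" "t * C\<^sup>2 \<le> \<kappa> / 4" "t * C \<le> 1/4"
    and R: "norm w \<le> R" "R\<^sup>2 < r\<^sup>2 + 3/4 * t * \<kappa>" and r: "3/4 \<le> r"
  shows "norm (w + t *\<^sub>R c) < r"
proof (cases "norm w < 1/2")
  case True
  have "norm (w + t *\<^sub>R c) \<le> norm w + t * norm c"
    using norm_triangle_ineq[of w "t *\<^sub>R c"] t by simp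
  also have "\<dots> \<le> norm w + t * C"
    using mult_left_mono[OF C t(1)] by simp
  finally show ?thesis using True t r by linarith
next
  case False
  have "0 \<le> t * C\<^sup>2" using t(1) by simp
  then have "0 \<le> \<kappa>" using t(2) by linarith
  have "(norm (w + t *\<^sub>R c))\<^sup>2 = (norm w)\<^sup>2 + 2 * (t * inner c w) + t * (t * (norm c)\<^sup>2)"
    unfolding power2_norm_eq_inner by (simp add: inner_add inner_commute algebra_simps)
  also have "\<dots> \<le> R\<^sup>2 - t * \<kappa> + t * \<kappa> / 4"
  proof -
    have "(norm w)\<^sup>2 \<le> R\<^sup>2" using R(1) by (simp add: power_mono)
    moreover have "t * inner c w \<le> - t * \<kappa> / 2"
    proof -
      have "t * inner c w \<le> t * (- \<kappa> * norm w)" using mult_left_mono[OF inward t(1)] .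
      also have "\<dots> \<le> - t * \<kappa> / 2"
        using mult_left_mono[of "1/2" "norm w" "t * \<kappa>"] False \<open>0 \<le> \<kappa>\<close> t(1) by simp
      finally show ?thesis .
    qed
    moreover have "t * (t * (norm c)\<^sup>2) \<le> t * (t * C\<^sup>2)"
      using C t(1) by (intro mult_left_mono power_mono) auto
    moreover have "t * (t * C\<^sup>2) \<le> t * \<kappa> / 4"
      using mult_left_mono[OF t(2) t(1)] by simp
    ultimately show ?thesis by linarith
  qed
  also have "\<dots> < r\<^sup>2" using R(2) by linarith
  finally have "(norm (w + t *\<^sub>R c))\<^sup>2 < r\<^sup>2" .
  then show ?thesis by (rule power2_less_imp_less) (use r in linarith)
qed

lemma one_minus_squared_ge: "1 - 2 * a \<le> (1 - a)\<^sup>2" for a :: real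
  by (simp add: power2_diff)

lemma one_plus_squared_le: "0 \<le> a \<Longrightarrow> a \<le> 1 \<Longrightarrow> (1 + a)\<^sup>2 \<le> 1 + 3 * a" for a :: real
  by (simp add: power2_eq_square algebra_simps mult_left_le)

text \<open>Below, \<open>\<epsilon>\<kappa>/8\<close> plays the role of \<open>\<alpha>\<^sub>0\<close>, and \<open>\<epsilon>\<kappa>/16\<close> is the margin that keeps the
  closures of the images inside the open discs.\<close>

context
  fixes c :: "'j \<Rightarrow> complex" and J :: "'j set" and \<kappa> C \<epsilon> :: real
  assumes inward: "\<And>w. \<exists>j\<in>J. inner (c j) w \<le> - \<kappa> * norm w"
    and norm_le: "\<And>j. j \<in> J \<Longrightarrow> norm (c j) \<le> C"
    and kappa: "0 < \<kappa>" "\<kappa> \<le> 1" and C: "1 \<le> C"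
    and eps: "0 < \<epsilon>" "12 * \<epsilon> * C\<^sup>2 \<le> \<kappa>"
begin

lemma eps_kappa_bounds: "0 < \<epsilon> * \<kappa>" "\<epsilon> * \<kappa> \<le> 1/12"
proof -
  have "1 \<le> C\<^sup>2" using C by (simp add: one_le_power)
  then have "\<epsilon> \<le> \<epsilon> * C\<^sup>2" using eps(1) by simp
  moreover have "\<epsilon> * \<kappa> \<le> \<epsilon>" using kappa eps(1) by simp
  ultimately show "\<epsilon> * \<kappa> \<le> 1/12" using eps kappa by linarith
  show "0 < \<epsilon> * \<kappa>" using eps kappa by simp
qed

lemma step_size_bounds:
  assumes "0 \<le> t" "t \<le> 3 * \<epsilon>"
  shows "t * C\<^sup>2 \<le> \<kappa> / 4" "t * C \<le> 1/4"
proof -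
  have "t * C\<^sup>2 \<le> 3 * \<epsilon> * C\<^sup>2" using assms by (simp add: mult_right_mono)
  then show "t * C\<^sup>2 \<le> \<kappa> / 4" using eps(2) by simp
  moreover have "t * C \<le> t * C\<^sup>2"
    using C assms(1) by (intro mult_left_mono) (auto simp: power2_eq_square)
  ultimately show "t * C \<le> 1/4" using kappa by simp
qed

lemma cball_subset_Union_images:
  assumes "1 - \<epsilon> * \<kappa> / 8 \<le> norm \<rho>"
  shows "cball 0 1 \<subseteq> (\<Union>j\<in>J. (\<lambda>z. \<rho> * z + of_real \<epsilon> * c j) ` ball 0 1)"
proof
  fix y :: complex
  assume "y \<in> cball 0 1"
  obtain j where j: "j \<in> J" "inner (- c j) y \<le> - \<kappa> * norm y"
    using inward[of "- y"] by auto
  have "norm (- c j) \<le> C" using norm_le[OF j(1)] by simp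
  have "norm (y + \<epsilon> *\<^sub>R - c j) < 1 - \<epsilon> * \<kappa> / 8"
  proof (rule norm_add_scaleR_lt[OF j(2) \<open>norm (- c j) \<le> C\<close> _ step_size_bounds, where R = 1])
    show "1\<^sup>2 < (1 - \<epsilon> * \<kappa> / 8)\<^sup>2 + 3/4 * \<epsilon> * \<kappa>"
      using one_minus_squared_ge[of "\<epsilon> * \<kappa> / 8"] eps_kappa_bounds by simp
  qed (use \<open>y \<in> cball 0 1\<close> eps eps_kappa_bounds in \<open>simp | linarith\<close>)+
  moreover have "0 < norm \<rho>" using assms eps_kappa_bounds by linarith
  ultimately have "(y - of_real \<epsilon> * c j) / \<rho> \<in> ball 0 1"
    using assms by (simp add: scaleR_conv_of_real norm_divide divide_less_eq)
  moreover have "y = \<rho> * ((y - of_real \<epsilon> * c j) / \<rho>) + of_real \<epsilon> * c j"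
    using \<open>0 < norm \<rho>\<close> by simp
  ultimately have "y \<in> (\<lambda>z. \<rho> * z + of_real \<epsilon> * c j) ` ball 0 1"
    by (rule rev_image_eqI)
  then show "y \<in> (\<Union>j\<in>J. (\<lambda>z. \<rho> * z + of_real \<epsilon> * c j) ` ball 0 1)"
    using j(1) by blast
qed

text \<open>The sets \<open>H\<^sub>j\<close>; the last condition says \<open>|\<phi>\<^sub>j(z/3)| < 1/3 - \<epsilon>\<kappa>/16\<close>.\<close>

definition piece :: "complex \<Rightarrow> 'j \<Rightarrow> complex set" where
  "piece \<rho> j = {z. norm z < 1 \<and> norm (\<rho> * z + of_real \<epsilon> * c j) < 1 - \<epsilon> * \<kappa> / 16 \<and>
                              norm (\<rho> * z + of_real (3 * \<epsilon>) * c j) < 1 - 3 * \<epsilon> * \<kappa> / 16}"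

lemma open_piece: "open (piece \<rho> j)"
  unfolding piece_def by (intro open_Collect_conj open_Collect_less continuous_intros) auto

lemma ball_eq_Union_pieces:
  assumes "norm \<rho> \<le> 1 + \<epsilon> * \<kappa> / 8"
  shows "ball 0 1 = (\<Union>j\<in>J. piece \<rho> j)"
proof
  show "ball 0 1 \<subseteq> (\<Union>j\<in>J. piece \<rho> j)"
  proof
    fix z :: complex
    assume z: "z \<in> ball 0 1"
    have w: "norm (\<rho> * z) \<le> 1 + \<epsilon> * \<kappa> / 8"
      using z assms mult_mono[of "norm \<rho>" "1 + \<epsilon> * \<kappa> / 8" "norm z" 1] eps_kappa_bounds
      by (simp add: norm_mult)
    obtain j where j: "j \<in> J" "inner (c j) (\<rho> * z) \<le> - \<kappa> * norm (\<rho> * z)"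
      using inward by blast
    have "norm (\<rho> * z + \<epsilon> *\<^sub>R c j) < 1 - \<epsilon> * \<kappa> / 16"
    proof (rule norm_add_scaleR_lt[OF j(2) norm_le[OF j(1)] _ step_size_bounds w])
      show "(1 + \<epsilon> * \<kappa> / 8)\<^sup>2 < (1 - \<epsilon> * \<kappa> / 16)\<^sup>2 + 3/4 * \<epsilon> * \<kappa>"
        using one_plus_squared_le[of "\<epsilon> * \<kappa> / 8"] one_minus_squared_ge[of "\<epsilon> * \<kappa> / 16"] eps_kappa_bounds
        by linarith
    qed (use eps eps_kappa_bounds in linarith)+
    moreover have "norm (\<rho> * z + (3 * \<epsilon>) *\<^sub>R c j) < 1 - 3 * \<epsilon> * \<kappa> / 16"
    proof (rule norm_add_scaleR_lt[OF j(2) norm_le[OF j(1)] _ step_size_bounds w])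
      show "(1 + \<epsilon> * \<kappa> / 8)\<^sup>2 < (1 - 3 * \<epsilon> * \<kappa> / 16)\<^sup>2 + 3/4 * (3 * \<epsilon>) * \<kappa>"
        using one_plus_squared_le[of "\<epsilon> * \<kappa> / 8"] one_minus_squared_ge[of "3 * \<epsilon> * \<kappa> / 16"] eps_kappa_bounds
        by linarith
    qed (use eps eps_kappa_bounds in linarith)+
    moreover have "norm z < 1" using z by simp
    ultimately have "z \<in> piece \<rho> j"
      unfolding piece_def mem_Collect_eq scaleR_conv_of_real by blast
    then show "z \<in> (\<Union>j\<in>J. piece \<rho> j)" using j(1) by blast
  qed
qed (auto simp: piece_def)

lemma closure_image_piece_subset:
  "closure ((\<lambda>z. \<rho> * z + of_real \<epsilon> * c j) ` piece \<rho> j) \<subseteq> ball 0 1"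
proof -
  have "closure ((\<lambda>z. \<rho> * z + of_real \<epsilon> * c j) ` piece \<rho> j) \<subseteq> cball 0 (1 - \<epsilon> * \<kappa> / 16)"
    by (intro closure_minimal) (auto simp: piece_def)
  also have "\<dots> \<subseteq> ball 0 1" using eps_kappa_bounds by auto
  finally show ?thesis .
qed

lemma closure_image_third_piece_subset:
  "closure ((\<lambda>z. \<rho> * z + of_real \<epsilon> * c j) ` (\<lambda>z. (1/3) * z) ` piece \<rho> j)
     \<subseteq> (\<lambda>z. (1/3) * z) ` ball 0 1"
proof -
  have third: "\<rho> * ((1/3) * z) + of_real \<epsilon> * c j = (1/3) * (\<rho> * z + of_real (3 * \<epsilon>) * c j)" for z
    by (simp add: algebra_simps)
  have "(\<lambda>z. \<rho> * z + of_real \<epsilon> * c j) ` (\<lambda>z. (1/3) * z) ` piece \<rho> j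
      \<subseteq> cball 0 ((1 - 3 * \<epsilon> * \<kappa> / 16) / 3)"
    unfolding image_image
  proof (rule image_subsetI)
    fix z
    assume "z \<in> piece \<rho> j"
    then show "\<rho> * ((1/3) * z) + of_real \<epsilon> * c j \<in> cball 0 ((1 - 3 * \<epsilon> * \<kappa> / 16) / 3)"
      unfolding third by (simp add: piece_def norm_mult)
  qed
  then have "closure ((\<lambda>z. \<rho> * z + of_real \<epsilon> * c j) ` (\<lambda>z. (1/3) * z) ` piece \<rho> j)
      \<subseteq> cball 0 ((1 - 3 * \<epsilon> * \<kappa> / 16) / 3)"
    by (rule closure_minimal) simp
  also have "\<dots> \<subseteq> (\<lambda>z. (1/3) * z) ` ball 0 1"
  proof
    fix y :: complex
    assume "y \<in> cball 0 ((1 - 3 * \<epsilon> * \<kappa> / 16) / 3)"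
    then have "3 * y \<in> ball 0 1" using eps_kappa_bounds by (auto simp: norm_mult)
    then show "y \<in> (\<lambda>z. (1/3) * z) ` ball 0 1" by force
  qed
  finally show ?thesis .
qed

lemma contraction_cover_and_pieces:
  assumes "1 - \<epsilon> * \<kappa> / 8 \<le> norm \<rho>" "norm \<rho> \<le> 1 + \<epsilon> * \<kappa> / 8"
  shows "cball 0 1 \<subseteq> (\<Union>j\<in>J. (\<lambda>z. \<rho> * z + of_real \<epsilon> * c j) ` ball 0 1) \<and>
    (\<exists>H. (\<forall>j\<in>J. open (H j)) \<and> ball 0 1 = (\<Union>j\<in>J. H j) \<and>
      (\<forall>j\<in>J. closure ((\<lambda>z. \<rho> * z + of_real \<epsilon> * c j) ` H j) \<subseteq> ball 0 1 \<and>
        closure ((\<lambda>z. \<rho> * z + of_real \<epsilon> * c j) ` (\<lambda>z. (1/3) * z) ` H j)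
          \<subseteq> (\<lambda>z. (1/3) * z) ` ball 0 1))"
  by (intro conjI exI[of _ "piece \<rho>"] ballI cball_subset_Union_images assms
      ball_eq_Union_pieces open_piece closure_image_piece_subset closure_image_third_piece_subset)

end

theorem lemma3p2:
  fixes c :: "nat \<Rightarrow> complex" and \<eta> :: real
  assumes noncol: "\<not> collinear {c 1, c 2, c 3}"
    and sum0: "c 1 + c 2 + c 3 = 0"
    and eta: "\<eta> > 0"
  shows "\<exists>\<epsilon>0 \<alpha>0 :: real. 0 < \<epsilon>0 \<and> \<epsilon>0 < \<eta> \<and> 0 < \<alpha>0 \<and> \<alpha>0 < \<eta> \<and>
    (\<forall>\<rho> :: complex. 1 - \<alpha>0 \<le> norm \<rho> \<and> norm \<rho> \<le> 1 + \<alpha>0 \<longrightarrow>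
      cball 0 1 \<subseteq> (\<Union>j\<in>{1,2,3}. (\<lambda>z. \<rho> * z + complex_of_real \<epsilon>0 * c j) ` ball 0 1) \<and>
      (\<exists>H :: nat \<Rightarrow> complex set.
         (\<forall>j\<in>{1,2,3}. open (H j)) \<and>
         ball 0 1 = (\<Union>j\<in>{1,2,3}. H j) \<and>
         (\<forall>j\<in>{1,2,3}.
            closure ((\<lambda>z. \<rho> * z + complex_of_real \<epsilon>0 * c j) ` H j) \<subseteq> ball 0 1 \<and>
            closure ((\<lambda>z. \<rho> * z + complex_of_real \<epsilon>0 * c j) ` ((\<lambda>z. (1/3) * z) ` H j))
              \<subseteq> (\<lambda>z. (1/3) * z) ` ball 0 1)))"
proof -
  obtain \<kappa>0 where "0 < \<kappa>0" and inward0: "\<And>w. \<exists>j\<in>{1,2,3}. inner (c j) w \<le> - \<kappa>0 * norm w"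
    using uniformly_negative_inner[of "{1,2,3::nat}" c] noncollinear_sum_zero_negative_inner[OF noncol sum0]
    by auto
  define \<kappa> where "\<kappa> = min \<kappa>0 1"
  define C where "C = 1 + norm (c 1) + norm (c 2) + norm (c 3)"
  define \<epsilon> where "\<epsilon> = min (\<eta> / 2) (\<kappa> / (12 * C\<^sup>2))"
  have "1 \<le> C" by (simp add: C_def)
  have inward: "\<exists>j\<in>{1,2,3}. inner (c j) w \<le> - \<kappa> * norm w" for w
    using inward0[of w] mult_right_mono[of \<kappa> \<kappa>0 "norm w"] by (force simp: \<kappa>_def)
  have norm_le: "norm (c j) \<le> C" if "j \<in> {1,2,3}" for j
    using that by (auto simp: C_def)
  have kappa: "0 < \<kappa>" "\<kappa> \<le> 1" using \<open>0 < \<kappa>0\<close> by (auto simp: \<kappa>_def)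
  have "\<epsilon> \<le> \<kappa> / (12 * C\<^sup>2)" by (simp add: \<epsilon>_def)
  then have eps: "0 < \<epsilon>" "12 * \<epsilon> * C\<^sup>2 \<le> \<kappa>"
    using kappa \<open>1 \<le> C\<close> eta by (simp add: \<epsilon>_def, simp add: field_simps)
  note family = inward norm_le kappa \<open>1 \<le> C\<close> eps
  have "\<epsilon> < \<eta>" using eta by (simp add: \<epsilon>_def)
  moreover have "\<epsilon> * \<kappa> / 8 < \<eta>"
    using \<open>\<epsilon> < \<eta>\<close> eps(1) kappa mult_left_le[of \<kappa> \<epsilon>] by linarith
  moreover have "0 < \<epsilon> * \<kappa> / 8" using eps(1) kappa(1) by simp
  ultimately show ?thesis
    using eps(1) contraction_cover_and_pieces[OF family]
    by (intro exI[of _ \<epsilon>, OF exI[of _ "\<epsilon> * \<kappa> / 8"]] conjI allI impI) auto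
qed

end
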